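(* Let $n\ge2$, and set $A=\bigl(\sum_{j=0}^{\lceil n/2\rceil-1}2\cdot4^j\bigr)\bmod 2^n$ (the $n$-bit integer whose bits at odd positions are $1$ and at even positions are $0$) and $B=\bigl(\sum_{j=0}^{\lceil n/2\rceil-1}4^j\bigr)\bmod 2^n$ (bits at even positions $1$, at odd positions $0$). For $x\in\{0,\dots,2^n-1\}$ let $y^{(1)}(x)=(0\dotplus x)\oplus(A\dotplus x)$ and $y^{(2)}(x)=(A\dotplus x)\oplus(B\dotplus x)$. Then the pair $(y^{(1)}(x),y^{(2)}(x))$ determines $x$ modulo $2^{n-1}$: for all $x,x'\in\{0,\dots,2^n-1\}$, if $y^{(1)}(x)=y^{(1)}(x')$ and $y^{(2)}(x)=y^{(2)}(x')$ then $x\equiv x'\pmod{2^{n-1}}$.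
   Context: $a\dotplus b=(a+b)\bmod 2^n$; $\oplus$ is bitwise XOR of $n$-bit integers. These are the queries $(\alpha,\beta)=(0,A)$ and $(\alpha,\beta)=(A,B)$ for the equation $y=(\alpha\dotplus x)\oplus(\beta\dotplus x)$. *)

theory Defs
  imports Main
begin

definition addmod :: "nat \<Rightarrow> nat \<Rightarrow> nat \<Rightarrow> nat" where
  "addmod n a b = (a + b) mod 2 ^ n"

definition ydiff :: "nat \<Rightarrow> nat \<Rightarrow> nat \<Rightarrow> nat \<Rightarrow> nat" where
  "ydiff n \<alpha> \<beta> x = xor (addmod n \<alpha> x) (addmod n \<beta> x)"

definition constA :: "nat \<Rightarrow> nat" where
  "constA n = (\<Sum>j<(n + 1) div 2. 2 * 4 ^ j) mod 2 ^ n"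

definition constB :: "nat \<Rightarrow> nat" where
  "constB n = (\<Sum>j<(n + 1) div 2. 4 ^ j) mod 2 ^ n"

end

theory Submission
  imports Defs
begin

(* Write c_a(i) for the carry into position i of the n-bit sum a + x.
   Bit i of (a + x) is a_i XOR x_i XOR c_a(i), so bit i of y1 = (0 + x) XOR (A + x) is
   A_i XOR c_A(i) and bit i of y2 = (A + x) XOR (B + x) is A_i XOR B_i XOR c_A(i) XOR c_B(i).
   Hence (y1, y2) determines both carry sequences c_A(i), c_B(i) for i < n.
   The carry c_a(i+1) only depends on x mod 2^(i+1) and P = a mod 2^(i+1).  The low parts
   P = A mod 2^(i+1), Q = B mod 2^(i+1) are "complementary": P + Q + 1 = 2^(i+1) and
   |P - Q| <= 2^i.  For such a pair, if x and x' agree below position i but differ in bit i,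
   then one of the two carries into position i+1 must differ.  So an induction on i shows
   that x and x' agree modulo 2^i for every i < n, i.e. modulo 2^(n-1). *)

text \<open>The base-4 repunit 1 + 4 + ... + 4^(k-1); B is such a number and A twice one.\<close>
definition quad_repunit :: "nat \<Rightarrow> nat" where
  "quad_repunit k = (\<Sum>j<k. 4 ^ j)"

lemma quad_repunit_Suc: "quad_repunit (Suc k) = quad_repunit k + 4 ^ k"
  by (simp add: quad_repunit_def)

lemma quad_repunit_closed_form: "3 * quad_repunit k + 1 = 4 ^ k"
  by (induction k) (auto simp: quad_repunit_def)

lemma quad_repunit_add: "quad_repunit (a + b) = quad_repunit a + 4 ^ a * quad_repunit b"
  by (induction b) (auto simp: quad_repunit_def power_add algebra_simps)

lemma quad_repunit_truncate:
  assumes "t \<le> k" and "(2::nat) ^ m dvd c * 4 ^ t"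
  shows "c * quad_repunit k mod 2 ^ m = c * quad_repunit t mod 2 ^ m"
proof -
  obtain q where q: "c * 4 ^ t = 2 ^ m * q" using assms(2) by (auto elim: dvdE)
  have "c * quad_repunit k = c * quad_repunit t + c * 4 ^ t * quad_repunit (k - t)"
    using quad_repunit_add[of t "k - t"] assms(1) by (simp add: algebra_simps)
  then show ?thesis unfolding q by (simp add: mult.assoc)
qed

lemma four_pow_eq: "(4::nat) ^ t = 2 ^ (2 * t)"
  by (simp add: power_mult)

lemma constA_mod:
  assumes "m \<le> n"
  shows "constA n mod 2 ^ m = 2 * quad_repunit (m div 2)"
proof -
  define t where "t = m div 2"
  have "(2::nat) ^ m dvd 2 ^ (2 * t + 1)"
    unfolding t_def by (intro le_imp_power_dvd) simp
  then have dvd: "(2::nat) ^ m dvd 2 * 4 ^ t" by (simp add: four_pow_eq)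
  have "(2::nat) ^ (2 * t) \<le> 2 ^ m" unfolding t_def by (intro power_increasing) auto
  then have small: "2 * quad_repunit t < 2 ^ m"
    using quad_repunit_closed_form[of t] unfolding four_pow_eq by linarith
  have "constA n mod 2 ^ m = 2 * quad_repunit ((n + 1) div 2) mod 2 ^ m"
    using mod_mod_cancel[OF le_imp_power_dvd[OF assms, where a = "2::nat"]]
    by (simp add: constA_def quad_repunit_def sum_distrib_left)
  also have "\<dots> = 2 * quad_repunit t mod 2 ^ m"
    by (rule quad_repunit_truncate) (use assms dvd in \<open>auto simp: t_def\<close>)
  also have "\<dots> = 2 * quad_repunit t" using small by simp
  finally show ?thesis unfolding t_def .
qed

lemma constB_mod:
  assumes "m \<le> n"
  shows "constB n mod 2 ^ m = quad_repunit ((m + 1) div 2)"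
proof -
  define t where "t = (m + 1) div 2"
  have "(2::nat) ^ m dvd 2 ^ (2 * t)"
    unfolding t_def by (intro le_imp_power_dvd) simp
  then have dvd: "(2::nat) ^ m dvd 1 * 4 ^ t" by (simp add: four_pow_eq)
  have "(2::nat) ^ (2 * t) \<le> 2 ^ (m + 1)" unfolding t_def by (intro power_increasing) auto
  then have small: "quad_repunit t < 2 ^ m"
    using quad_repunit_closed_form[of t] unfolding four_pow_eq by simp
  have "constB n mod 2 ^ m = 1 * quad_repunit ((n + 1) div 2) mod 2 ^ m"
    using mod_mod_cancel[OF le_imp_power_dvd[OF assms, where a = "2::nat"]]
    by (simp add: constB_def quad_repunit_def)
  also have "\<dots> = 1 * quad_repunit t mod 2 ^ m"
    by (rule quad_repunit_truncate) (use assms dvd in \<open>auto simp: t_def\<close>)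
  also have "\<dots> = quad_repunit t" using small by simp
  finally show ?thesis unfolding t_def .
qed

lemma constAB_complementary:
  assumes "Suc i \<le> n"
  defines "P \<equiv> constA n mod 2 ^ Suc i" and "Q \<equiv> constB n mod 2 ^ Suc i"
  shows "P + Q + 1 = 2 ^ Suc i" and "P \<le> Q + 2 ^ i" and "Q \<le> P + 2 ^ i"
proof -
  have PQ: "P = 2 * quad_repunit (Suc i div 2)" "Q = quad_repunit (Suc (Suc i) div 2)"
    unfolding P_def Q_def using constA_mod[OF assms(1)] constB_mod[OF assms(1)] by simp_all
  have "P + Q + 1 = 2 ^ Suc i \<and> P \<le> Q + 2 ^ i \<and> Q \<le> P + 2 ^ i"
  proof (cases "even i")
    case True
    then obtain t where i: "i = 2 * t" by blast
    have "(2::nat) ^ i = 4 ^ t" using i four_pow_eq by simp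
    then show ?thesis
      unfolding PQ i using quad_repunit_closed_form[of t] by (simp add: quad_repunit_Suc)
  next
    case False
    then obtain t where i: "i = 2 * t + 1" by (metis oddE)
    have "(2::nat) ^ Suc i = 4 ^ Suc t" using i four_pow_eq[of "Suc t"] by simp
    then show ?thesis
      unfolding PQ i using quad_repunit_closed_form[of "Suc t"] by simp
  qed
  then show "P + Q + 1 = 2 ^ Suc i" and "P \<le> Q + 2 ^ i" and "Q \<le> P + 2 ^ i" by auto
qed

definition carry :: "nat \<Rightarrow> nat \<Rightarrow> nat \<Rightarrow> bool" where
  "carry a x i \<longleftrightarrow> 2 ^ i \<le> x mod 2 ^ i + a mod 2 ^ i"

lemma bit_add_carry:
  "bit (a + x :: nat) i \<longleftrightarrow> odd (a div 2 ^ i + x div 2 ^ i + of_bool (carry a x i))"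
proof -
  have "a mod 2 ^ i < 2 ^ i" and "x mod 2 ^ i < 2 ^ i" by simp_all
  then have "a mod 2 ^ i + x mod 2 ^ i < 2 * 2 ^ i" by linarith
  then have "(a mod 2 ^ i + x mod 2 ^ i) div 2 ^ i = of_bool (carry a x i)"
    by (auto simp: carry_def div_nat_eqI)
  then show ?thesis by (simp add: bit_iff_odd div_add1_eq[of a x])
qed

lemma bit_addmod:
  assumes "i < n"
  shows "bit (addmod n a x) i \<longleftrightarrow> odd (a div 2 ^ i + x div 2 ^ i + of_bool (carry a x i))"
  using assms by (simp add: addmod_def take_bit_eq_mod[symmetric] bit_take_bit_iff bit_add_carry)

lemma ydiff_determine_carries:
  assumes "i < n"
    and ya: "ydiff n 0 a x = ydiff n 0 a x'"
    and yab: "ydiff n a b x = ydiff n a b x'"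
  shows "carry a x i = carry a x' i" and "carry b x i = carry b x' i"
proof -
  have no_carry: "carry 0 z i \<longleftrightarrow> False" for z by (simp add: carry_def not_le)
  have "bit (ydiff n 0 a x) i = bit (ydiff n 0 a x') i" using ya by simp
  then show ca: "carry a x i = carry a x' i"
    unfolding ydiff_def bit_xor_iff bit_addmod[OF assms(1)] no_carry
    by (cases "carry a x i"; cases "carry a x' i") auto
  have "bit (ydiff n a b x) i = bit (ydiff n a b x') i" using yab by simp
  then show "carry b x i = carry b x' i"
    unfolding ydiff_def bit_xor_iff bit_addmod[OF assms(1)] using ca
    by (cases "carry a x' i"; cases "carry b x i"; cases "carry b x' i") auto
qed

lemma complementary_carries_step:
  fixes P Q :: nat
  assumes low: "x mod 2 ^ i = x' mod 2 ^ i"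
    and compl: "P mod 2 ^ Suc i + Q mod 2 ^ Suc i + 1 = 2 ^ Suc i"
    and close: "P mod 2 ^ Suc i \<le> Q mod 2 ^ Suc i + 2 ^ i"
               "Q mod 2 ^ Suc i \<le> P mod 2 ^ Suc i + 2 ^ i"
    and cP: "carry P x (Suc i) = carry P x' (Suc i)"
    and cQ: "carry Q x (Suc i) = carry Q x' (Suc i)"
  shows "x mod 2 ^ Suc i = x' mod 2 ^ Suc i"
proof -
  define r where "r = x mod 2 ^ i"
  have r_small: "r < 2 ^ i" by (simp add: r_def)
  have split: "z mod 2 ^ Suc i = 2 ^ i * (z div 2 ^ i mod 2) + z mod 2 ^ i" for z :: nat
    by (metis mod_mult2_eq power_Suc2)
  have "x div 2 ^ i mod 2 = x' div 2 ^ i mod 2"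
  proof (rule ccontr)
    assume "x div 2 ^ i mod 2 \<noteq> x' div 2 ^ i mod 2"
    then have "{x div 2 ^ i mod 2, x' div 2 ^ i mod 2} = {0, 1}" by auto
    with cP cQ have "(2 * 2 ^ i \<le> r + P mod 2 ^ Suc i) = (2 * 2 ^ i \<le> r + 2 ^ i + P mod 2 ^ Suc i)"
      and "(2 * 2 ^ i \<le> r + Q mod 2 ^ Suc i) = (2 * 2 ^ i \<le> r + 2 ^ i + Q mod 2 ^ Suc i)"
      unfolding carry_def split[of x] split[of x'] low[symmetric] r_def[symmetric]
      by (auto simp: doubleton_eq_iff ac_simps)
    then show False using r_small compl close by simp linarith
  qed
  then show ?thesis using split[of x] split[of x'] low by simp
qed

theorem corollary1:
  fixes n x x' :: nat
  assumes "n \<ge> 2"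
    and "x < 2 ^ n" and "x' < 2 ^ n"
    and "ydiff n 0 (constA n) x = ydiff n 0 (constA n) x'"
    and "ydiff n (constA n) (constB n) x = ydiff n (constA n) (constB n) x'"
  shows "x mod 2 ^ (n - 1) = x' mod 2 ^ (n - 1)"
proof -
  have "x mod 2 ^ i = x' mod 2 ^ i" if "i < n" for i
    using that
  proof (induction i)
    case 0
    then show ?case by simp
  next
    case (Suc i)
    show ?case
      by (rule complementary_carries_step[OF Suc.IH
            constAB_complementary[of i n]
            ydiff_determine_carries[OF Suc.prems assms(4,5)]])
        (use Suc.prems in auto)
  qed
  then show ?thesis using assms(1) by simp
qed

end
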